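(* Let $d\in\mathcal D$ be optimal, i.e. $J^d_{\mu,\sigma}=\max_{d''\in\mathcal D}J^{d''}_{\mu,\sigma}$, and write $(\mathbf P,\mathbf r,J_\mu,\mathbf g)$ for its quantities. Then for every $d'\in\mathcal D$ with $(\mathbf P',\mathbf r')$, $$\sum_{j\in\mathcal S}p'(i,j)g(j)+r'(i)-\beta(r'(i)-J_\mu)^2\ \le\ \sum_{j\in\mathcal S}p(i,j)g(j)+r(i)-\beta(r(i)-J_\mu)^2\qquad\text{for all } i\in\mathcal S.$$
   Context: Let $\mathcal S=\{1,\dots,S\}$ be a finite state space and $\mathcal A$ a finite action set. For $i,j\in\mathcal S$, $a\in\mathcal A$, let $p^a(i,j)\ge 0$ with $\sum_{j}p^a(i,j)=1$ be transition probabilities and $r(i,a)\in\mathbb R$ rewards. A deterministic stationary policy is a map $d:\mathcal S\to\mathcal A$; $\mathcal D$ denotes the set of such policies. Under $d$, $\mathbf P^d$ is the matrix with entries $p(i,j)=p^{d(i)}(i,j)$ and $\mathbf r^d$ the vector with entries $r(i)=r(i,d(i))$. Standing assumption: for every $d\in\mathcal D$ the chain with transition matrix $\mathbf P^d$ is irreducible, so it has a unique stationary distribution $\boldsymbol\pi^d$ (row vector, $\boldsymbol\pi^d\mathbf P^d=\boldsymbol\pi^d$, $\boldsymbol\pi^d\mathbf 1=1$) with all entries strictly positive. Define $J^d_\mu=\boldsymbol\pi^d\mathbf r^d$, $J^d_\sigma=\sum_i\pi^d(i)(r(i,d(i))-J^d_\mu)^2$, and for fixed $\beta>0$, $J^d_{\mu,\sigma}=J^d_\mu-\beta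 J^d_\sigma=\boldsymbol\pi^d\mathbf f^d$ with $f^d(i)=r(i,d(i))-\beta(r(i,d(i))-J^d_\mu)^2$. The performance potential $\mathbf g^d$ is any solution of $\mathbf g^d=\mathbf f^d-J^d_{\mu,\sigma}\mathbf 1+\mathbf P^d\mathbf g^d$ (unique up to an additive constant vector). *)

theory Defs
  imports Complex_Main
begin

text \<open>States: a finite type 's; actions: a finite type 'a.
  Transition probabilities p a i j = p^a(i,j); rewards r i a = r(i,a).
  A deterministic stationary policy is d :: 's \<Rightarrow> 'a.\<close>

definition trans_mat :: "('a \<Rightarrow> 's \<Rightarrow> 's \<Rightarrow> real) \<Rightarrow> ('s \<Rightarrow> 'a) \<Rightarrow> 's \<Rightarrow> 's \<Rightarrow> real" where
  "trans_mat p d i j = p (d i) i j"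

definition rew_vec :: "('s \<Rightarrow> 'a \<Rightarrow> real) \<Rightarrow> ('s \<Rightarrow> 'a) \<Rightarrow> 's \<Rightarrow> real" where
  "rew_vec r d i = r i (d i)"

definition irreducible_mat :: "('s \<Rightarrow> 's \<Rightarrow> real) \<Rightarrow> bool" where
  "irreducible_mat P \<longleftrightarrow> (\<forall>i j. (i, j) \<in> {(x, y). P x y > 0}\<^sup>*)"

definition is_stationary :: "('s::finite \<Rightarrow> 's \<Rightarrow> real) \<Rightarrow> ('s \<Rightarrow> real) \<Rightarrow> bool" where
  "is_stationary P \<pi> \<longleftrightarrow> (\<forall>j. (\<Sum>i\<in>UNIV. \<pi> i * P i j) = \<pi> j) \<and> (\<Sum>i\<in>UNIV. \<pi> i) = 1"

text \<open>The (unique, under irreducibility) stationary distribution of policy d.\<close>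
definition stat_dist :: "('a \<Rightarrow> 's::finite \<Rightarrow> 's \<Rightarrow> real) \<Rightarrow> ('s \<Rightarrow> 'a) \<Rightarrow> 's \<Rightarrow> real" where
  "stat_dist p d = (THE \<pi>. is_stationary (trans_mat p d) \<pi>)"

definition J_mu :: "('a \<Rightarrow> 's::finite \<Rightarrow> 's \<Rightarrow> real) \<Rightarrow> ('s \<Rightarrow> 'a \<Rightarrow> real) \<Rightarrow> ('s \<Rightarrow> 'a) \<Rightarrow> real" where
  "J_mu p r d = (\<Sum>i\<in>UNIV. stat_dist p d i * rew_vec r d i)"

definition f_vec :: "('a \<Rightarrow> 's::finite \<Rightarrow> 's \<Rightarrow> real) \<Rightarrow> ('s \<Rightarrow> 'a \<Rightarrow> real) \<Rightarrow> real \<Rightarrow> ('s \<Rightarrow> 'a) \<Rightarrow> 's \<Rightarrow> real" where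
  "f_vec p r \<beta> d i = rew_vec r d i - \<beta> * (rew_vec r d i - J_mu p r d)\<^sup>2"

text \<open>Mean-variance criterion J_mu - beta * J_sigma = \<pi> f.\<close>
definition J_mu_sigma :: "('a \<Rightarrow> 's::finite \<Rightarrow> 's \<Rightarrow> real) \<Rightarrow> ('s \<Rightarrow> 'a \<Rightarrow> real) \<Rightarrow> real \<Rightarrow> ('s \<Rightarrow> 'a) \<Rightarrow> real" where
  "J_mu_sigma p r \<beta> d = (\<Sum>i\<in>UNIV. stat_dist p d i * f_vec p r \<beta> d i)"

definition is_potential :: "('a \<Rightarrow> 's::finite \<Rightarrow> 's \<Rightarrow> real) \<Rightarrow> ('s \<Rightarrow> 'a \<Rightarrow> real) \<Rightarrow> real \<Rightarrow> ('s \<Rightarrow> 'a) \<Rightarrow> ('s \<Rightarrow> real) \<Rightarrow> bool" where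
  "is_potential p r \<beta> d g \<longleftrightarrow>
     (\<forall>i. g i = f_vec p r \<beta> d i - J_mu_sigma p r \<beta> d + (\<Sum>j\<in>UNIV. trans_mat p d i j * g j))"

end

theory Submission
  imports Defs "HOL-Analysis.Analysis"
begin

text \<open>Switching \<open>d\<close> to an action \<open>a\<close> in a single state \<open>i\<close> gives a policy \<open>e\<close>. Averaging
  the Poisson equation of \<open>d\<close> against the stationary distribution \<open>\<pi>\<close> of \<open>e\<close> cancels the
  potential terms; and since a variance is the least mean square deviation, measuring the
  deviations of \<open>e\<close>'s rewards from the mean reward of \<open>d\<close> rather than from their own mean can
  only lower the criterion of \<open>e\<close>. Hence \<open>J(e) \<ge> J(d) + \<pi> i * (Q i a - Q i (d i))\<close>, where
  \<open>Q i\<close> is the left-hand side of the theorem as a function of the action. Irreducibility gives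
  \<open>\<pi> i > 0\<close>, so optimality of \<open>d\<close> forces \<open>Q i a \<le> Q i (d i)\<close>.\<close>

definition stochastic_mat :: "('s::finite \<Rightarrow> 's \<Rightarrow> real) \<Rightarrow> bool" where
  "stochastic_mat P \<longleftrightarrow> (\<forall>i j. P i j \<ge> 0) \<and> (\<forall>i. (\<Sum>j\<in>UNIV. P i j) = 1)"

definition invariant_vec :: "('s::finite \<Rightarrow> 's \<Rightarrow> real) \<Rightarrow> ('s \<Rightarrow> real) \<Rightarrow> bool" where
  "invariant_vec P \<nu> \<longleftrightarrow> (\<forall>j. (\<Sum>i\<in>UNIV. \<nu> i * P i j) = \<nu> j)"

lemma is_stationary_iff: "is_stationary P \<pi> \<longleftrightarrow> invariant_vec P \<pi> \<and> (\<Sum>i\<in>UNIV. \<pi> i) = 1"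
  by (simp add: is_stationary_def invariant_vec_def)

text \<open>\<open>I - P\<close> kills the constant vector, so it is singular, and hence so is its transpose.\<close>
lemma stochastic_invariant_vec_exists:
  fixes P :: "'s::finite \<Rightarrow> 's \<Rightarrow> real"
  assumes rows: "\<And>i. (\<Sum>j\<in>UNIV. P i j) = 1"
  shows "\<exists>\<nu>. \<nu> \<noteq> (\<lambda>_. 0) \<and> invariant_vec P \<nu>"
proof -
  define A :: "real^'s^'s" where "A = (\<chi> i j. (if i = j then 1 else 0) - P i j)"
  have "A *v (\<chi> j. 1) = 0"
    by (simp add: A_def matrix_vector_mult_def vec_eq_iff sum_subtractf rows)
  then have "\<not> invertible A"
    by (metis invertible_left_inverse matrix_left_invertible_ker one_index zero_index
        zero_neq_one vec_lambda_beta)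
  then have "\<not> invertible (transpose A)"
    by (metis transpose_invertible transpose_transpose)
  then obtain x where x: "x \<noteq> 0" "transpose A *v x = 0"
    by (metis invertible_left_inverse matrix_left_invertible_ker)
  have "(\<Sum>i\<in>UNIV. x $ i * P i j) = x $ j" for j
  proof -
    have "0 = (\<Sum>i\<in>UNIV. ((if i = j then 1 else 0) - P i j) * x $ i)"
      using x(2) by (simp add: vec_eq_iff A_def matrix_vector_mult_def transpose_def)
    also have "\<dots> = (\<Sum>i\<in>UNIV. (if i = j then x $ i else 0) - x $ i * P i j)"
      by (rule sum.cong) (auto simp: algebra_simps)
    also have "\<dots> = x $ j - (\<Sum>i\<in>UNIV. x $ i * P i j)"
      by (simp add: sum_subtractf)
    finally show ?thesis by simp
  qed
  moreover have "(\<lambda>i. x $ i) \<noteq> (\<lambda>_. 0)"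
    using x(1) by (auto simp: vec_eq_iff)
  ultimately show ?thesis
    unfolding invariant_vec_def by blast
qed

text \<open>Mass is conserved by a stochastic matrix, while the positive part can only grow.\<close>
lemma invariant_vec_pos_part:
  assumes "stochastic_mat P" and "invariant_vec P \<nu>"
  shows "invariant_vec P (\<lambda>i. max (\<nu> i) 0)"
proof -
  define \<mu> where "\<mu> = (\<lambda>i. max (\<nu> i) 0)"
  have nn: "\<And>i j. P i j \<ge> 0" and rows: "\<And>i. (\<Sum>j\<in>UNIV. P i j) = 1"
    using assms(1) by (auto simp: stochastic_mat_def)
  have le: "\<mu> j \<le> (\<Sum>i\<in>UNIV. \<mu> i * P i j)" for j
  proof (cases "\<nu> j \<le> 0")
    case True
    then show ?thesis
      unfolding \<mu>_def by (auto intro!: sum_nonneg simp: nn)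
  next
    case False
    then have "\<mu> j = (\<Sum>i\<in>UNIV. \<nu> i * P i j)"
      using assms(2) by (simp add: \<mu>_def invariant_vec_def)
    also have "\<dots> \<le> (\<Sum>i\<in>UNIV. \<mu> i * P i j)"
      by (intro sum_mono mult_right_mono) (auto simp: \<mu>_def nn)
    finally show ?thesis .
  qed
  have "(\<Sum>j\<in>UNIV. \<Sum>i\<in>UNIV. \<mu> i * P i j) = (\<Sum>i\<in>UNIV. \<mu> i * (\<Sum>j\<in>UNIV. P i j))"
    by (subst sum.swap) (simp add: sum_distrib_left)
  then have "(\<Sum>j\<in>UNIV. (\<Sum>i\<in>UNIV. \<mu> i * P i j) - \<mu> j) = 0"
    by (simp add: rows sum_subtractf)
  then have "\<forall>j. (\<Sum>i\<in>UNIV. \<mu> i * P i j) - \<mu> j = 0"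
    using le by (subst (asm) sum_nonneg_eq_0_iff) auto
  then show ?thesis
    by (simp add: invariant_vec_def \<mu>_def)
qed

lemma irreducible_invariant_nonneg_pos:
  assumes "stochastic_mat P" and "irreducible_mat P" and "invariant_vec P \<mu>"
    and "\<And>i. \<mu> i \<ge> 0" and "\<mu> k0 > 0"
  shows "\<mu> k > 0"
proof -
  have "(k0, k) \<in> {(x, y). P x y > 0}\<^sup>*"
    using assms(2) unfolding irreducible_mat_def by blast
  then show ?thesis
  proof (induction rule: rtrancl_induct)
    case base
    show ?case using assms(5) .
  next
    case (step y z)
    then have "0 < \<mu> y * P y z" by simp
    also have "\<dots> \<le> (\<Sum>i\<in>UNIV. \<mu> i * P i z)"
      using assms(1,4) unfolding stochastic_mat_def by (intro member_le_sum) auto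
    also have "\<dots> = \<mu> z"
      using assms(3) unfolding invariant_vec_def by blast
    finally show ?case .
  qed
qed

lemma irreducible_invariant_pos:
  assumes "stochastic_mat P" and "irreducible_mat P" and "invariant_vec P \<nu>" and "\<nu> k0 > 0"
  shows "\<nu> k > 0"
proof -
  define \<mu> where "\<mu> = (\<lambda>i. max (\<nu> i) 0)"
  have "\<mu> k > 0"
    by (rule irreducible_invariant_nonneg_pos[OF assms(1,2), of \<mu> k0])
      (use invariant_vec_pos_part[OF assms(1,3)] assms(4) in \<open>simp_all add: \<mu>_def\<close>)
  then show ?thesis by (simp add: \<mu>_def)
qed

lemma invariant_vec_uminus: "invariant_vec P (\<lambda>i. - \<nu> i) \<longleftrightarrow> invariant_vec P \<nu>"
proof -
  have "(\<Sum>i\<in>UNIV. - \<nu> i * P i j) = - (\<Sum>i\<in>UNIV. \<nu> i * P i j)" for j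
    by (simp add: sum_negf)
  then show ?thesis
    unfolding invariant_vec_def by (metis neg_equal_iff_equal)
qed

lemma irreducible_invariant_sum_zero:
  assumes "stochastic_mat P" and "irreducible_mat P" and "invariant_vec P \<nu>"
    and "(\<Sum>i\<in>UNIV. \<nu> i) = 0"
  shows "\<nu> = (\<lambda>_. 0)"
proof -
  have no_pos: "\<nu> k \<le> 0" if "invariant_vec P \<nu>" "(\<Sum>i\<in>UNIV. \<nu> i) = 0" for \<nu> k
  proof (rule ccontr)
    assume "\<not> \<nu> k \<le> 0"
    then have "\<nu> k' > 0" for k'
      using irreducible_invariant_pos[OF assms(1,2) that(1), of k] by simp
    then have "(\<Sum>i\<in>UNIV. \<nu> i) > 0"
      by (simp add: sum_pos)
    with that(2) show False by simp
  qed
  have "\<nu> k \<le> 0" for k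
    using no_pos assms(3,4) by blast
  moreover have "- \<nu> k \<le> 0" for k
    using no_pos[of "\<lambda>i. - \<nu> i"] assms(3,4) by (simp add: invariant_vec_uminus sum_negf)
  ultimately show ?thesis
    by (intro ext) (meson neg_le_0_iff_le order_antisym)
qed

lemma irreducible_stationary_exists:
  assumes "stochastic_mat P" and "irreducible_mat P"
  shows "\<exists>\<rho>. is_stationary P \<rho> \<and> (\<forall>k. \<rho> k > 0)"
proof -
  obtain \<nu> where \<nu>: "\<nu> \<noteq> (\<lambda>_. 0)" "invariant_vec P \<nu>"
    using stochastic_invariant_vec_exists[of P] assms(1) unfolding stochastic_mat_def by blast
  obtain \<mu> k0 where inv: "invariant_vec P \<mu>" and "\<mu> k0 > 0"
  proof (cases "\<exists>k. \<nu> k > 0")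
    case True
    with \<nu>(2) that show ?thesis by blast
  next
    case False
    then obtain k where "\<nu> k < 0"
      using \<nu>(1) by (metis linorder_neqE_linordered_idom ext)
    with \<nu>(2) that[of "\<lambda>i. - \<nu> i" k] show ?thesis
      by (simp add: invariant_vec_uminus)
  qed
  then have pos: "\<And>k. \<mu> k > 0"
    using assms irreducible_invariant_pos by blast
  define s where "s = (\<Sum>i\<in>UNIV. \<mu> i)"
  have "s > 0"
    unfolding s_def using pos by (simp add: sum_pos)
  have "invariant_vec P (\<lambda>i. \<mu> i / s)"
    using inv by (simp add: invariant_vec_def sum_divide_distrib[symmetric])
  moreover have "(\<Sum>i\<in>UNIV. \<mu> i / s) = 1"
    using \<open>s > 0\<close> by (simp add: s_def sum_divide_distrib[symmetric])
  ultimately show ?thesis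
    using pos \<open>s > 0\<close> by (intro exI[of _ "\<lambda>i. \<mu> i / s"]) (simp add: is_stationary_iff)
qed

lemma irreducible_stationary_unique:
  assumes "stochastic_mat P" and "irreducible_mat P"
    and "is_stationary P \<pi>" and "is_stationary P \<rho>"
  shows "\<pi> = \<rho>"
proof -
  have "(\<lambda>i. \<pi> i - \<rho> i) = (\<lambda>_. 0)"
    using assms by (intro irreducible_invariant_sum_zero)
      (auto simp: is_stationary_iff invariant_vec_def left_diff_distrib sum_subtractf)
  then show ?thesis by (simp add: fun_eq_iff)
qed

lemma stat_dist_stationary_pos:
  assumes "stochastic_mat (trans_mat p d)" and "irreducible_mat (trans_mat p d)"
  shows "is_stationary (trans_mat p d) (stat_dist p d)" and "stat_dist p d k > 0"
proof -
  obtain \<rho> where \<rho>: "is_stationary (trans_mat p d) \<rho>" "\<forall>k. \<rho> k > 0"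
    using irreducible_stationary_exists assms by blast
  have "stat_dist p d = \<rho>"
    unfolding stat_dist_def
    using \<rho>(1) irreducible_stationary_unique[OF assms] by blast
  then show "is_stationary (trans_mat p d) (stat_dist p d)" and "stat_dist p d k > 0"
    using \<rho> by simp_all
qed

lemma stationary_average_step:
  assumes "invariant_vec P \<rho>"
  shows "(\<Sum>k\<in>UNIV. \<rho> k * (\<Sum>j\<in>UNIV. P k j * g j)) = (\<Sum>j\<in>UNIV. \<rho> j * g j)"
proof -
  have "(\<Sum>k\<in>UNIV. \<rho> k * (\<Sum>j\<in>UNIV. P k j * g j)) = (\<Sum>k\<in>UNIV. \<Sum>j\<in>UNIV. \<rho> k * P k j * g j)"
    by (simp add: sum_distrib_left mult.assoc)
  also have "\<dots> = (\<Sum>j\<in>UNIV. (\<Sum>k\<in>UNIV. \<rho> k * P k j) * g j)"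
    by (subst sum.swap) (simp add: sum_distrib_right)
  also have "\<dots> = (\<Sum>j\<in>UNIV. \<rho> j * g j)"
    using assms by (simp add: invariant_vec_def)
  finally show ?thesis .
qed

lemma weighted_sq_dev_shift:
  fixes \<rho> x :: "'s::finite \<Rightarrow> real"
  assumes "(\<Sum>k\<in>UNIV. \<rho> k) = 1" and "m = (\<Sum>k\<in>UNIV. \<rho> k * x k)"
  shows "(\<Sum>k\<in>UNIV. \<rho> k * (x k - c)\<^sup>2) = (\<Sum>k\<in>UNIV. \<rho> k * (x k - m)\<^sup>2) + (m - c)\<^sup>2"
proof -
  have split: "\<rho> k * (x k - c)\<^sup>2
      = \<rho> k * (x k - m)\<^sup>2 + 2 * (m - c) * (\<rho> k * x k - \<rho> k * m) + (m - c)\<^sup>2 * \<rho> k" for k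
    by (simp add: power2_eq_square algebra_simps)
  have "(\<Sum>k\<in>UNIV. \<rho> k * (x k - c)\<^sup>2)
      = (\<Sum>k\<in>UNIV. \<rho> k * (x k - m)\<^sup>2) + 2 * (m - c) * (\<Sum>k\<in>UNIV. \<rho> k * x k - \<rho> k * m)
        + (m - c)\<^sup>2 * (\<Sum>k\<in>UNIV. \<rho> k)"
    by (simp only: split sum.distrib sum_distrib_left)
  also have "(\<Sum>k\<in>UNIV. \<rho> k * x k - \<rho> k * m) = 0"
    using assms by (simp add: sum_subtractf flip: sum_distrib_right)
  finally show ?thesis
    using assms(1) by simp
qed

definition mv_action_value ::
    "('a \<Rightarrow> 's::finite \<Rightarrow> 's \<Rightarrow> real) \<Rightarrow> ('s \<Rightarrow> 'a \<Rightarrow> real) \<Rightarrow> real \<Rightarrow> ('s \<Rightarrow> 'a) \<Rightarrow> ('s \<Rightarrow> real)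
      \<Rightarrow> 's \<Rightarrow> 'a \<Rightarrow> real" where
  "mv_action_value p r \<beta> d g i a =
     (\<Sum>j\<in>UNIV. p a i j * g j) + r i a - \<beta> * (r i a - J_mu p r d)\<^sup>2"

lemma mv_action_value_potential:
  assumes "is_potential p r \<beta> d g"
  shows "mv_action_value p r \<beta> d g i (d i) = g i + J_mu_sigma p r \<beta> d"
proof -
  have "g i = f_vec p r \<beta> d i - J_mu_sigma p r \<beta> d + (\<Sum>j\<in>UNIV. trans_mat p d i j * g j)"
    using assms unfolding is_potential_def by blast
  then show ?thesis
    unfolding mv_action_value_def f_vec_def rew_vec_def trans_mat_def by linarith
qed

lemma J_mu_sigma_performance_difference:
  assumes "is_stationary (trans_mat p e) (stat_dist p e)" and "\<beta> \<ge> 0"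
    and "is_potential p r \<beta> d g"
  shows "J_mu_sigma p r \<beta> d
      + (\<Sum>k\<in>UNIV. stat_dist p e k *
           (mv_action_value p r \<beta> d g k (e k) - mv_action_value p r \<beta> d g k (d k)))
    \<le> J_mu_sigma p r \<beta> e"
proof -
  define \<rho> where "\<rho> = stat_dist p e"
  define x where "x = rew_vec r e"
  define m where "m = J_mu p r d"
  define J where "J = J_mu_sigma p r \<beta> d"
  define Pg where "Pg = (\<lambda>k. \<Sum>j\<in>UNIV. trans_mat p e k j * g j)"
  have inv: "invariant_vec (trans_mat p e) \<rho>" and mass: "(\<Sum>k\<in>UNIV. \<rho> k) = 1"
    using assms(1) by (simp_all add: \<rho>_def is_stationary_iff)
  have step: "(\<Sum>k\<in>UNIV. \<rho> k * Pg k) = (\<Sum>k\<in>UNIV. \<rho> k * g k)"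
    unfolding Pg_def by (rule stationary_average_step[OF inv])
  have mean: "J_mu p r e = (\<Sum>k\<in>UNIV. \<rho> k * x k)"
    by (simp add: J_mu_def \<rho>_def x_def)
  have weighted_diff: "\<rho> k * (mv_action_value p r \<beta> d g k (e k) - mv_action_value p r \<beta> d g k (d k))
      = \<rho> k * x k - \<beta> * (\<rho> k * (x k - m)\<^sup>2) - J * \<rho> k + (\<rho> k * Pg k - \<rho> k * g k)" for k
    using mv_action_value_potential[OF assms(3), of k]
    by (simp add: mv_action_value_def x_def m_def J_def Pg_def rew_vec_def trans_mat_def algebra_simps)
  have "(\<Sum>k\<in>UNIV. \<rho> k * (mv_action_value p r \<beta> d g k (e k) - mv_action_value p r \<beta> d g k (d k)))
      = (\<Sum>k\<in>UNIV. \<rho> k * x k) - \<beta> * (\<Sum>k\<in>UNIV. \<rho> k * (x k - m)\<^sup>2) - J * (\<Sum>k\<in>UNIV. \<rho> k)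
        + ((\<Sum>k\<in>UNIV. \<rho> k * Pg k) - (\<Sum>k\<in>UNIV. \<rho> k * g k))"
    by (simp only: weighted_diff sum.distrib sum_subtractf sum_distrib_left)
  also have "\<dots> = (\<Sum>k\<in>UNIV. \<rho> k * x k) - \<beta> * (\<Sum>k\<in>UNIV. \<rho> k * (x k - J_mu p r e)\<^sup>2)
      - \<beta> * (J_mu p r e - m)\<^sup>2 - J"
    using weighted_sq_dev_shift[OF mass mean, of m] mass step by (simp add: algebra_simps)
  also have "(\<Sum>k\<in>UNIV. \<rho> k * x k) - \<beta> * (\<Sum>k\<in>UNIV. \<rho> k * (x k - J_mu p r e)\<^sup>2)
      = J_mu_sigma p r \<beta> e"
    by (simp add: J_mu_sigma_def f_vec_def \<rho>_def x_def right_diff_distrib sum_subtractf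
        sum_distrib_left mult.left_commute[of \<beta>])
  finally show ?thesis
    using assms(2) by (simp add: \<rho>_def J_def)
qed

theorem theorem2:
  fixes p :: "'a::finite \<Rightarrow> 's::finite \<Rightarrow> 's \<Rightarrow> real"
    and r :: "'s \<Rightarrow> 'a \<Rightarrow> real"
    and \<beta> :: real
    and d :: "'s \<Rightarrow> 'a"
    and g :: "'s \<Rightarrow> real"
  assumes p_nonneg: "\<And>a i j. p a i j \<ge> 0"
    and p_stoch: "\<And>a i. (\<Sum>j\<in>UNIV. p a i j) = 1"
    and irred: "\<And>d0. irreducible_mat (trans_mat p d0)"
    and beta_pos: "\<beta> > 0"
    and optimal: "\<And>d''. J_mu_sigma p r \<beta> d'' \<le> J_mu_sigma p r \<beta> d"
    and potential: "is_potential p r \<beta> d g"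
  shows "\<forall>d' i.
     (\<Sum>j\<in>UNIV. p (d' i) i j * g j) + r i (d' i) - \<beta> * (r i (d' i) - J_mu p r d)\<^sup>2
       \<le> (\<Sum>j\<in>UNIV. p (d i) i j * g j) + r i (d i) - \<beta> * (r i (d i) - J_mu p r d)\<^sup>2"
proof (intro allI)
  fix d' i
  define e where "e = d(i := d' i)"
  define Q where "Q = mv_action_value p r \<beta> d g"
  have stoch: "stochastic_mat (trans_mat p e)"
    using p_nonneg p_stoch by (simp add: stochastic_mat_def trans_mat_def)
  have "stat_dist p e k * (Q k (e k) - Q k (d k))
      = (if k = i then stat_dist p e i * (Q i (d' i) - Q i (d i)) else 0)" for k
    by (simp add: e_def)
  then have "(\<Sum>k\<in>UNIV. stat_dist p e k * (Q k (e k) - Q k (d k)))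
      = stat_dist p e i * (Q i (d' i) - Q i (d i))"
    by simp
  moreover have "J_mu_sigma p r \<beta> d + (\<Sum>k\<in>UNIV. stat_dist p e k * (Q k (e k) - Q k (d k)))
      \<le> J_mu_sigma p r \<beta> e"
    unfolding Q_def
    using J_mu_sigma_performance_difference[OF stat_dist_stationary_pos(1)[OF stoch irred]
        less_imp_le[OF beta_pos] potential] .
  ultimately have "stat_dist p e i * (Q i (d' i) - Q i (d i)) \<le> 0"
    using optimal[of e] by linarith
  then have "Q i (d' i) \<le> Q i (d i)"
    using stat_dist_stationary_pos(2)[OF stoch irred, of i] by (simp add: mult_le_0_iff)
  then show "(\<Sum>j\<in>UNIV. p (d' i) i j * g j) + r i (d' i) - \<beta> * (r i (d' i) - J_mu p r d)\<^sup>2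
       \<le> (\<Sum>j\<in>UNIV. p (d i) i j * g j) + r i (d i) - \<beta> * (r i (d i) - J_mu p r d)\<^sup>2"
    unfolding Q_def mv_action_value_def .
qed

end
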